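(* For every finite nonempty poset $P$, $h(P)-1\le e(P)\le d(P)$. Moreover, if $P$ has a smallest and a largest element, then $e(P)=d(P)$.
   Context: An injective map $f$ from a poset $P$ to a poset $Q$ is a weak embedding if $p\le q$ implies $f(p)\le f(q)$. $B_n$ is the Boolean lattice of all subsets of $\{1,\dots,n\}$ ordered by inclusion; its $k$-th level is the family of $k$-element subsets. $d(P)$ is the smallest integer $d$ such that $P$ weakly embeds into $B_d$. $e(P)$ is the largest integer $e$ such that for every $n$ the union of any $e$ consecutive levels of $B_n$ admits no weak embedding of $P$. $h(P)$ is the number of elements of a longest chain of $P$. *)

theory Defs
  imports Main
begin

text \<open>A poset is a carrier set A with an order relation r satisfying partial_order_on A r.
  The Boolean lattice B_n is Pow {1..n} ordered by inclusion.\<close>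

definition weak_embedding :: "'a set \<Rightarrow> 'a rel \<Rightarrow> ('a \<Rightarrow> nat set) \<Rightarrow> nat set set \<Rightarrow> bool" where
  "weak_embedding A r f Q \<longleftrightarrow>
     inj_on f A \<and> f ` A \<subseteq> Q \<and> (\<forall>p\<in>A. \<forall>q\<in>A. (p, q) \<in> r \<longrightarrow> f p \<subseteq> f q)"

definition boolean_lattice :: "nat \<Rightarrow> nat set set" where
  "boolean_lattice n = Pow {1..n}"

definition consec_levels :: "nat \<Rightarrow> nat \<Rightarrow> nat \<Rightarrow> nat set set" where
  "consec_levels n k e = {S \<in> boolean_lattice n. k \<le> card S \<and> card S < k + e}"

definition dim_d :: "'a set \<Rightarrow> 'a rel \<Rightarrow> nat" where
  "dim_d A r = (LEAST d. \<exists>f. weak_embedding A r f (boolean_lattice d))"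

definition levels_e :: "'a set \<Rightarrow> 'a rel \<Rightarrow> nat" where
  "levels_e A r = (GREATEST e. \<forall>n k. k + e \<le> n + 1 \<longrightarrow>
       \<not> (\<exists>f. weak_embedding A r f (consec_levels n k e)))"

definition is_chain :: "'a set \<Rightarrow> 'a rel \<Rightarrow> 'a set \<Rightarrow> bool" where
  "is_chain A r C \<longleftrightarrow> C \<subseteq> A \<and> (\<forall>x\<in>C. \<forall>y\<in>C. (x, y) \<in> r \<or> (y, x) \<in> r)"

definition height_h :: "'a set \<Rightarrow> 'a rel \<Rightarrow> nat" where
  "height_h A r = Max {card C | C. is_chain A r C}"

end

theory Submission
  imports Defs
begin

text \<open>Lower bound: a weak embedding maps a chain to a chain of sets, whose
  cardinalities are pairwise distinct, so a longest chain needs h(P) levels. Upper bound: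
  B_d is itself the union of its d + 1 levels. For the reverse inequality when P has a
  least element b and a greatest element t: the image of a weak embedding f into d
  consecutive levels lies in the interval [f b, f t], and X \<mapsto> X - f b maps it into the
  Boolean lattice on f t - f b, which has fewer than d elements, contradicting the
  minimality of d.\<close>

lemma weak_embedding_mono:
  "weak_embedding A r f Q \<Longrightarrow> Q \<subseteq> Q' \<Longrightarrow> weak_embedding A r f Q'"
  unfolding weak_embedding_def by blast

lemma boolean_lattice_mono: "d \<le> n \<Longrightarrow> boolean_lattice d \<subseteq> boolean_lattice n"
  unfolding boolean_lattice_def by auto

lemma finite_mem_boolean_lattice: "S \<in> boolean_lattice n \<Longrightarrow> finite S"
  unfolding boolean_lattice_def by (auto intro: finite_subset)

lemma boolean_lattice_eq_consec_levels: "boolean_lattice n = consec_levels n 0 (n + 1)"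
proof -
  have "card S < n + 1" if "S \<subseteq> {1..n}" for S :: "nat set"
    using card_mono[OF _ that] by simp
  then show ?thesis
    unfolding consec_levels_def boolean_lattice_def by auto
qed

lemma ex_weak_embedding_boolean_lattice_card:
  fixes f :: "'a \<Rightarrow> 'b set"
  assumes "finite U" and "inj_on f A" and "f ` A \<subseteq> Pow U"
    and "\<forall>p\<in>A. \<forall>q\<in>A. (p, q) \<in> r \<longrightarrow> f p \<subseteq> f q"
  shows "\<exists>F. weak_embedding A r F (boolean_lattice (card U))"
proof -
  have "\<exists>g. bij_betw g U {1..card U}"
    by (rule finite_same_card_bij) (simp_all add: assms(1))
  then obtain g where g: "bij_betw g U {1..card U}" ..
  have "weak_embedding A r (\<lambda>x. g ` f x) (boolean_lattice (card U))"
    unfolding weak_embedding_def boolean_lattice_def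
  proof (intro conjI)
    show "inj_on (\<lambda>x. g ` f x) A"
    proof (rule inj_onI)
      fix x y assume "x \<in> A" "y \<in> A" "g ` f x = g ` f y"
      moreover have "f x \<subseteq> U" "f y \<subseteq> U"
        using assms(3) \<open>x \<in> A\<close> \<open>y \<in> A\<close> by auto
      ultimately have "f x = f y"
        using inj_on_image_eq_iff[OF bij_betw_imp_inj_on[OF g]] by simp
      with assms(2) \<open>x \<in> A\<close> \<open>y \<in> A\<close> show "x = y"
        by (meson inj_onD)
    qed
    show "(\<lambda>x. g ` f x) ` A \<subseteq> Pow {1..card U}"
      using assms(3) bij_betw_imp_surj_on[OF g] by blast
  qed (use assms(4) in blast)
  then show ?thesis by blast
qed

lemma inj_on_down_sets:
  assumes "partial_order_on A r"
  shows "inj_on (\<lambda>p. {q\<in>A. (q, p) \<in> r}) A"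
proof (rule inj_onI)
  fix x y assume "x \<in> A" "y \<in> A" and eq: "{q\<in>A. (q, x) \<in> r} = {q\<in>A. (q, y) \<in> r}"
  moreover have "(x, x) \<in> r" "(y, y) \<in> r"
    using assms \<open>x \<in> A\<close> \<open>y \<in> A\<close> by (auto simp: partial_order_on_def preorder_on_def refl_on_def)
  ultimately have "(x, y) \<in> r" "(y, x) \<in> r"
    by blast+
  then show "x = y"
    using assms by (auto simp: partial_order_on_def antisym_def)
qed

lemma ex_weak_embedding_boolean_lattice:
  assumes "partial_order_on A r" and "finite A"
  shows "\<exists>f. weak_embedding A r f (boolean_lattice (card A))"
proof (rule ex_weak_embedding_boolean_lattice_card[OF \<open>finite A\<close> inj_on_down_sets[OF assms(1)]])
  show "\<forall>p\<in>A. \<forall>q\<in>A. (p, q) \<in> r \<longrightarrow> {x\<in>A. (x, p) \<in> r} \<subseteq> {x\<in>A. (x, q) \<in> r}"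
    using assms(1) by (auto simp: partial_order_on_def preorder_on_def dest: transD)
qed auto

lemma dim_d_embedding:
  assumes "partial_order_on A r" and "finite A"
  shows "\<exists>f. weak_embedding A r f (boolean_lattice (dim_d A r))"
  unfolding dim_d_def by (rule LeastI_ex) (use ex_weak_embedding_boolean_lattice[OF assms] in blast)

lemma dim_d_le: "weak_embedding A r f (boolean_lattice d) \<Longrightarrow> dim_d A r \<le> d"
  unfolding dim_d_def by (rule Least_le) blast

definition no_embedding_into_levels :: "'a set \<Rightarrow> 'a rel \<Rightarrow> nat \<Rightarrow> bool" where
  "no_embedding_into_levels A r e \<longleftrightarrow>
     (\<forall>n k. k + e \<le> n + 1 \<longrightarrow> \<not> (\<exists>f. weak_embedding A r f (consec_levels n k e)))"

lemma levels_e_eq_Greatest: "levels_e A r = (GREATEST e. no_embedding_into_levels A r e)"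
  unfolding levels_e_def no_embedding_into_levels_def ..

text \<open>Without this bound the GREATEST in the definition of levels_e would be a junk value.\<close>

lemma no_embedding_into_levels_le_dim_d:
  assumes "partial_order_on A r" and "finite A" and "no_embedding_into_levels A r e"
  shows "e \<le> dim_d A r"
proof (rule ccontr)
  assume "\<not> e \<le> dim_d A r"
  then have "boolean_lattice (dim_d A r) \<subseteq> consec_levels (e - 1) 0 e"
    using boolean_lattice_mono[of "dim_d A r" "e - 1"] boolean_lattice_eq_consec_levels[of "e - 1"]
    by simp
  with dim_d_embedding[OF assms(1,2)] have "\<exists>f. weak_embedding A r f (consec_levels (e - 1) 0 e)"
    by (meson weak_embedding_mono)
  with assms(3) show False
    unfolding no_embedding_into_levels_def by fastforce
qed

lemma le_levels_e:
  assumes "partial_order_on A r" and "finite A" and "no_embedding_into_levels A r e"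
  shows "e \<le> levels_e A r"
  unfolding levels_e_eq_Greatest
  using assms(3) no_embedding_into_levels_le_dim_d[OF assms(1,2)] by (rule Greatest_le_nat)

lemma no_embedding_into_levels_levels_e:
  assumes "partial_order_on A r" and "finite A" and "A \<noteq> {}"
  shows "no_embedding_into_levels A r (levels_e A r)"
proof -
  have "no_embedding_into_levels A r 0"
    using \<open>A \<noteq> {}\<close> unfolding no_embedding_into_levels_def weak_embedding_def consec_levels_def
    by auto
  then show ?thesis
    unfolding levels_e_eq_Greatest
    using no_embedding_into_levels_le_dim_d[OF assms(1,2)] by (rule GreatestI_nat)
qed

lemma levels_e_le_dim_d:
  assumes "partial_order_on A r" and "finite A" and "A \<noteq> {}"
  shows "levels_e A r \<le> dim_d A r"
  using no_embedding_into_levels_le_dim_d[OF assms(1,2) no_embedding_into_levels_levels_e[OF assms]] .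

lemma height_h_attained:
  assumes "finite A"
  shows "\<exists>C. is_chain A r C \<and> card C = height_h A r"
proof -
  have "{card C | C. is_chain A r C} \<subseteq> card ` Pow A"
    by (auto simp: is_chain_def)
  then have "finite {card C | C. is_chain A r C}"
    using assms by (meson finite_Pow_iff finite_imageI finite_subset)
  moreover have "{card C | C. is_chain A r C} \<noteq> {}"
    using is_chain_def by fastforce
  ultimately have "height_h A r \<in> {card C | C. is_chain A r C}"
    unfolding height_h_def by (rule Max_in)
  then show ?thesis
    by auto
qed

lemma inj_on_card_weak_embedding_chain:
  assumes f: "weak_embedding A r f Q" and fin: "\<forall>S\<in>Q. finite S" and C: "is_chain A r C"
  shows "inj_on (\<lambda>x. card (f x)) C"
proof (rule inj_onI)
  fix x y assume "x \<in> C" "y \<in> C" and eq: "card (f x) = card (f y)"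
  then have "x \<in> A" "y \<in> A" and comparable: "(x, y) \<in> r \<or> (y, x) \<in> r"
    using C unfolding is_chain_def by auto
  have mono: "\<forall>p\<in>A. \<forall>q\<in>A. (p, q) \<in> r \<longrightarrow> f p \<subseteq> f q" and "inj_on f A" "f ` A \<subseteq> Q"
    using f unfolding weak_embedding_def by auto
  then have "finite (f x)" "finite (f y)"
    using fin \<open>x \<in> A\<close> \<open>y \<in> A\<close> by auto
  moreover have "f x \<subseteq> f y \<or> f y \<subseteq> f x"
    using comparable mono \<open>x \<in> A\<close> \<open>y \<in> A\<close> by auto
  ultimately have "f x = f y"
    using eq card_subset_eq by metis
  with \<open>inj_on f A\<close> \<open>x \<in> A\<close> \<open>y \<in> A\<close> show "x = y"
    by (meson inj_onD)
qed

lemma card_chain_le_levels: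
  assumes f: "weak_embedding A r f (consec_levels n k e)" and C: "is_chain A r C"
  shows "card C \<le> e"
proof -
  have fin: "\<forall>S\<in>consec_levels n k e. finite S"
    unfolding consec_levels_def by (auto dest: finite_mem_boolean_lattice)
  have "f ` C \<subseteq> consec_levels n k e"
    using f C unfolding weak_embedding_def is_chain_def by blast
  then have "(\<lambda>x. card (f x)) ` C \<subseteq> {k..<k + e}"
    unfolding consec_levels_def by auto
  then have "card ((\<lambda>x. card (f x)) ` C) \<le> e"
    using card_mono[of "{k..<k + e}"] by fastforce
  then show ?thesis
    using card_image[OF inj_on_card_weak_embedding_chain[OF f fin C]] by simp
qed

lemma height_h_minus_one_le_levels_e:
  assumes "partial_order_on A r" and "finite A"
  shows "height_h A r - 1 \<le> levels_e A r"
proof (cases "height_h A r = 0")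
  case False
  obtain C where "is_chain A r C" "card C = height_h A r"
    using height_h_attained[OF \<open>finite A\<close>] by blast
  have "no_embedding_into_levels A r (height_h A r - 1)"
    unfolding no_embedding_into_levels_def
  proof (intro allI impI notI, elim exE)
    fix n k f assume "weak_embedding A r f (consec_levels n k (height_h A r - 1))"
    then have "card C \<le> height_h A r - 1"
      using \<open>is_chain A r C\<close> by (rule card_chain_le_levels)
    with False \<open>card C = height_h A r\<close> show False
      by simp
  qed
  then show ?thesis
    using le_levels_e[OF assms] by blast
qed simp

lemma ex_weak_embedding_interval:
  assumes f: "weak_embedding A r f Q" and "finite T" and between: "\<forall>x\<in>A. S \<subseteq> f x \<and> f x \<subseteq> T"
  shows "\<exists>F. weak_embedding A r F (boolean_lattice (card (T - S)))"
proof (rule ex_weak_embedding_boolean_lattice_card)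
  show "inj_on (\<lambda>x. f x - S) A"
    using f between unfolding weak_embedding_def inj_on_def by (metis Diff_partition)
  show "(\<lambda>x. f x - S) ` A \<subseteq> Pow (T - S)"
    using between by blast
  show "\<forall>p\<in>A. \<forall>q\<in>A. (p, q) \<in> r \<longrightarrow> f p - S \<subseteq> f q - S"
    using f unfolding weak_embedding_def by blast
qed (use \<open>finite T\<close> in simp)

lemma no_embedding_into_levels_dim_d:
  assumes b: "b \<in> A" "\<forall>x\<in>A. (b, x) \<in> r" and t: "t \<in> A" "\<forall>x\<in>A. (x, t) \<in> r"
  shows "no_embedding_into_levels A r (dim_d A r)"
  unfolding no_embedding_into_levels_def
proof (intro allI impI notI, elim exE)
  fix n k f assume f: "weak_embedding A r f (consec_levels n k (dim_d A r))"
  then have between: "\<forall>x\<in>A. f b \<subseteq> f x \<and> f x \<subseteq> f t"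
    using b t unfolding weak_embedding_def by blast
  have "f b \<in> consec_levels n k (dim_d A r)" "f t \<in> consec_levels n k (dim_d A r)"
    using f b t unfolding weak_embedding_def by blast+
  then have "finite (f t)" "k \<le> card (f b)" "card (f t) < k + dim_d A r"
    unfolding consec_levels_def by (auto dest: finite_mem_boolean_lattice)
  moreover have "f b \<subseteq> f t"
    using between b by blast
  ultimately have "card (f t - f b) < dim_d A r"
    using card_Diff_subset[of "f b" "f t"] card_mono[of "f t" "f b"] finite_subset by fastforce
  moreover obtain F where "weak_embedding A r F (boolean_lattice (card (f t - f b)))"
    using ex_weak_embedding_interval[OF f \<open>finite (f t)\<close> between] by blast
  then have "dim_d A r \<le> card (f t - f b)"
    by (rule dim_d_le)
  ultimately show False
    by simp
qed

theorem mainTheorem3: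
  fixes A :: "'a set" and r :: "'a rel"
  assumes "partial_order_on A r" and "finite A" and "A \<noteq> {}"
  shows "height_h A r - 1 \<le> levels_e A r \<and> levels_e A r \<le> dim_d A r \<and>
         ((\<exists>b\<in>A. \<forall>x\<in>A. (b, x) \<in> r) \<longrightarrow> (\<exists>t\<in>A. \<forall>x\<in>A. (x, t) \<in> r) \<longrightarrow>
         levels_e A r = dim_d A r)"
proof (intro conjI impI)
  show "height_h A r - 1 \<le> levels_e A r"
    using height_h_minus_one_le_levels_e[OF assms(1,2)] .
  show le: "levels_e A r \<le> dim_d A r"
    using levels_e_le_dim_d[OF assms] .
  assume "\<exists>b\<in>A. \<forall>x\<in>A. (b, x) \<in> r" "\<exists>t\<in>A. \<forall>x\<in>A. (x, t) \<in> r"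
  then obtain b t where "b \<in> A" "\<forall>x\<in>A. (b, x) \<in> r" "t \<in> A" "\<forall>x\<in>A. (x, t) \<in> r"
    by blast
  then have "dim_d A r \<le> levels_e A r"
    by (intro le_levels_e[OF assms(1,2)] no_embedding_into_levels_dim_d)
  with le show "levels_e A r = dim_d A r"
    by simp
qed

end
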